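(* If $\mathfrak{p}=\mathfrak{c}$, then every almost disjoint family of size less than $\mathfrak{c}$ can be extended to a strongly tight MAD family.
   Context: An almost disjoint (AD) family is a family of infinite subsets of $\omega$ with pairwise finite intersections; MAD means maximal AD. $\mathcal{I}(\mathcal{A})$ is the ideal generated by $\mathcal{A}$ and the finite sets. An ideal $\mathcal{I}$ is strongly tight if for every $\{X_n:n\in\omega\}\subseteq[\omega]^\omega$ such that $\{n:X_n\subseteq^*Y\}$ is finite for every $Y\in\mathcal{I}$, there is $A\in\mathcal{I}$ with $A\cap X_n\ne\emptyset$ for all $n$; $\mathcal{A}$ is strongly tight if $\mathcal{I}(\mathcal{A})$ is. $\mathfrak{p}$ is the pseudointersection number. *)

theory Defs
  imports Main
begin

definition almost_subset :: "nat set \<Rightarrow> nat set \<Rightarrow> bool" where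
  "almost_subset X Y \<longleftrightarrow> finite (X - Y)"

definition almost_disjoint_family :: "nat set set \<Rightarrow> bool" where
  "almost_disjoint_family \<A> \<longleftrightarrow>
     (\<forall>X\<in>\<A>. infinite X) \<and> (\<forall>X\<in>\<A>. \<forall>Y\<in>\<A>. X \<noteq> Y \<longrightarrow> finite (X \<inter> Y))"

definition MAD_family :: "nat set set \<Rightarrow> bool" where
  "MAD_family \<A> \<longleftrightarrow> almost_disjoint_family \<A> \<and>
     (\<forall>\<B>. almost_disjoint_family \<B> \<and> \<A> \<subseteq> \<B> \<longrightarrow> \<B> = \<A>)"

definition ideal_gen :: "nat set set \<Rightarrow> nat set set" where
  "ideal_gen \<A> = {Y. \<exists>F. F \<subseteq> \<A> \<and> finite F \<and> finite (Y - \<Union>F)}"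

definition strongly_tight_ideal :: "nat set set \<Rightarrow> bool" where
  "strongly_tight_ideal \<I> \<longleftrightarrow>
     (\<forall>X :: nat \<Rightarrow> nat set.
        (\<forall>n. infinite (X n)) \<and> (\<forall>Y\<in>\<I>. finite {n. almost_subset (X n) Y})
        \<longrightarrow> (\<exists>A\<in>\<I>. \<forall>n. A \<inter> X n \<noteq> {}))"

definition strongly_tight :: "nat set set \<Rightarrow> bool" where
  "strongly_tight \<A> \<longleftrightarrow> strongly_tight_ideal (ideal_gen \<A>)"

definition SFIP :: "nat set set \<Rightarrow> bool" where
  "SFIP \<F> \<longleftrightarrow> (\<forall>G. G \<subseteq> \<F> \<and> finite G \<and> G \<noteq> {} \<longrightarrow> infinite (\<Inter>G))"

definition pseudointersection :: "nat set \<Rightarrow> nat set set \<Rightarrow> bool" where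
  "pseudointersection P \<F> \<longleftrightarrow> infinite P \<and> (\<forall>X\<in>\<F>. almost_subset P X)"

text \<open>Families witnessing the definition of the pseudointersection number p:
  families of infinite subsets of omega with the SFIP and no infinite pseudointersection.\<close>
definition p_witness :: "nat set set \<Rightarrow> bool" where
  "p_witness \<F> \<longleftrightarrow> (\<forall>X\<in>\<F>. infinite X) \<and> SFIP \<F> \<and> \<not> (\<exists>P. pseudointersection P \<F>)"

text \<open>\<open>p = c\<close>: the minimum of the cardinalities of witness families equals
  c = |P(omega)|, i.e. every witness family has size at least c and some witness
  family has size at most c.\<close>
definition p_eq_c :: bool where
  "p_eq_c \<longleftrightarrow>
     (\<forall>\<F>. p_witness \<F> \<longrightarrow> (card_of (UNIV :: nat set set), card_of \<F>) \<in> ordLeq) \<and>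
     (\<exists>\<F>. p_witness \<F> \<and> (card_of \<F>, card_of (UNIV :: nat set set)) \<in> ordLeq)"

end

theory Submission
  imports Defs "HOL-Library.Nat_Bijection" "HOL-Library.Infinite_Set"
begin

(* Because p = c, every family of fewer than c infinite sets with the strong finite intersection
   property has a pseudointersection; applied to the regions above the graphs of partial sums
   (coded in omega x omega), this shows that fewer than c functions are dominated.
   Let C be almost disjoint of size < c and (X_n) a sequence such that every set of I(C) almost
   contains only finitely many X_n. Each X_n outside I(C) is shrunk to a pseudointersection almost
   disjoint from C; each X_n in I(C) is shrunk into a member of C that it meets infinitely, chosen
   so that every member of C is used only finitely often. A dominating function then picks a point
   of every shrunken set while avoiding each member of C up to finitely many points, giving an
   infinite A almost disjoint from C that meets every X_n.
   Coding sequences by subsets of omega, a recursion of length c adds such a set for every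
   sequence, so the resulting almost disjoint family is strongly tight. Strongly tight almost
   disjoint families are maximal: the tails of a new infinite set almost disjoint from all members
   would violate strong tightness. *)

unbundle cardinal_syntax

abbreviation continuum :: "nat set rel" where
  "continuum \<equiv> |UNIV :: nat set set|"

lemma infinite_UNIV_nat_set: "infinite (UNIV :: nat set set)"
  by (metis finite_Pow_iff Pow_UNIV infinite_UNIV_nat)

lemma card_of_Un_less_continuum:
  "|A| <o continuum \<Longrightarrow> |B| <o continuum \<Longrightarrow> |A \<union> B| <o continuum"
  by (rule card_of_Un_ordLess_infinite[OF infinite_UNIV_nat_set])

lemma card_of_image_less_continuum: "|A| <o continuum \<Longrightarrow> |f ` A| <o continuum"
  using card_of_image ordLeq_ordLess_trans by blast

lemma card_of_finite_less_continuum: "finite A \<Longrightarrow> |A| <o continuum"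
  by (metis Field_card_of infinite_UNIV_nat_set card_of_Well_order finite_ordLess_infinite)

lemma card_of_nat_less_continuum: "|UNIV :: nat set| <o continuum"
  by (metis Pow_UNIV card_of_Pow)

lemma card_of_image_underS_less_continuum: "|f ` underS continuum \<alpha>| <o continuum"
  using card_of_underS[OF card_of_Card_order, of \<alpha>] card_of_image ordLeq_ordLess_trans
  by (metis Field_card_of UNIV_I)

lemma pseudointersection_exists:
  assumes p_eq_c and "\<forall>X\<in>\<F>. infinite X" and "SFIP \<F>" and "|\<F>| <o continuum"
  shows "\<exists>P. pseudointersection P \<F>"
proof (rule ccontr)
  assume "\<nexists>P. pseudointersection P \<F>"
  then have "p_witness \<F>" using assms(2,3) unfolding p_witness_def by blast
  then have "continuum \<le>o |\<F>|" using \<open>p_eq_c\<close> unfolding p_eq_c_def by blast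
  then show False using assms(4) not_ordLess_ordLeq by blast
qed

definition cofinite_columns :: "nat set \<Rightarrow> bool" where
  "cofinite_columns Q \<longleftrightarrow>
     (\<forall>\<^sub>F m in sequentially. \<forall>\<^sub>F k in sequentially. prod_encode (m, k) \<in> Q)"

lemma cofinite_columns_Inter:
  assumes "finite \<G>" and "\<forall>Q\<in>\<G>. cofinite_columns Q"
  shows "cofinite_columns (\<Inter>\<G>)"
proof -
  have "\<forall>\<^sub>F m in sequentially. \<forall>Q\<in>\<G>. \<forall>\<^sub>F k in sequentially. prod_encode (m, k) \<in> Q"
    using assms unfolding cofinite_columns_def by (intro eventually_ball_finite) auto
  then show ?thesis
    unfolding cofinite_columns_def
    by (rule eventually_mono) (use assms(1) in \<open>auto intro: eventually_ball_finite\<close>)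
qed

lemma cofinite_columns_infinite:
  assumes "cofinite_columns Q"
  shows "infinite Q"
proof -
  obtain m where "\<forall>\<^sub>F k in sequentially. prod_encode (m, k) \<in> Q"
    using eventually_happens'[OF sequentially_bot assms[unfolded cofinite_columns_def]] by blast
  then have "infinite {k. prod_encode (m, k) \<in> Q}"
    unfolding cofinite_eq_sequentially[symmetric] eventually_cofinite
    by (metis Collect_neg_eq Compl_eq_Diff_UNIV Diff_infinite_finite infinite_UNIV_nat)
  moreover have "inj (\<lambda>k. prod_encode (m, k))"
    by (simp add: inj_def prod_encode_eq)
  ultimately have "infinite ((\<lambda>k. prod_encode (m, k)) ` {k. prod_encode (m, k) \<in> Q})"
    using finite_imageD inj_on_subset by blast
  then show ?thesis
    by (rule infinite_super[rotated]) auto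
qed

lemma SFIP_cofinite_columns:
  assumes "\<forall>Q\<in>\<F>. cofinite_columns Q"
  shows "SFIP \<F>"
  unfolding SFIP_def
  using assms cofinite_columns_Inter cofinite_columns_infinite by (meson subset_iff)

definition columns_from :: "nat \<Rightarrow> nat set" where
  "columns_from m = {x. m \<le> fst (prod_decode x)}"

definition above_partial_sums :: "(nat \<Rightarrow> nat) \<Rightarrow> nat set" where
  "above_partial_sums f = {x. (\<Sum>t\<le>fst (prod_decode x). f t) \<le> snd (prod_decode x)}"

lemma cofinite_columns_columns_from: "cofinite_columns (columns_from m)"
proof -
  have "\<forall>\<^sub>F i in sequentially. \<forall>\<^sub>F k in sequentially. prod_encode (i, k) \<in> columns_from m"
    using eventually_ge_at_top[of m] by (rule eventually_mono) (simp add: columns_from_def)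
  then show ?thesis
    unfolding cofinite_columns_def .
qed

lemma cofinite_columns_above_partial_sums: "cofinite_columns (above_partial_sums f)"
proof -
  have "\<forall>\<^sub>F k in sequentially. prod_encode (m, k) \<in> above_partial_sums f" for m
    using eventually_ge_at_top[of "\<Sum>t\<le>m. f t"]
    by (rule eventually_mono) (simp add: above_partial_sums_def)
  then show ?thesis
    unfolding cofinite_columns_def by (simp add: always_eventually)
qed

lemma dominating_of_pseudointersection:
  assumes meets: "\<And>m. P \<inter> columns_from m \<noteq> {}"
    and below: "\<And>f. f \<in> G \<Longrightarrow> finite (P - above_partial_sums f)"
  shows "\<exists>h. \<forall>f\<in>G. finite {j. h j < f j}"
proof -
  have "\<forall>j. \<exists>y. y \<in> P \<and> j \<le> fst (prod_decode y)"
    using meets unfolding columns_from_def by blast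
  then obtain x where x: "\<And>j. x j \<in> P" "\<And>j. j \<le> fst (prod_decode (x j))"
    by (metis choice)
  define h where "h j = snd (prod_decode (x j))" for j
  have "finite {j. h j < f j}" if "f \<in> G" for f
  proof -
    define D where "D = fst ` prod_decode ` (P - above_partial_sums f)"
    have "finite D"
      unfolding D_def using below[OF that] by (intro finite_imageI)
    have "j \<in> (\<Union>i\<in>D. {..i})" if "h j < f j" for j
    proof -
      have "f j \<le> (\<Sum>t\<le>fst (prod_decode (x j)). f t)"
        using x(2)[of j] by (intro member_le_sum) auto
      then have "x j \<in> P - above_partial_sums f"
        using that x(1)[of j] unfolding h_def above_partial_sums_def by simp
      then have "fst (prod_decode (x j)) \<in> D"
        unfolding D_def by blast
      then show ?thesis
        using x(2)[of j] by auto
    qed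
    then have "{j. h j < f j} \<subseteq> (\<Union>i\<in>D. {..i})"
      by blast
    then show ?thesis
      by (rule finite_subset) (simp add: \<open>finite D\<close>)
  qed
  then show ?thesis
    by (intro exI[of _ h]) blast
qed

lemma small_family_dominated:
  fixes G :: "(nat \<Rightarrow> nat) set"
  assumes p_eq_c and "|G| <o continuum"
  shows "\<exists>h. \<forall>f\<in>G. finite {j. h j < f j}"
proof -
  define \<F> where "\<F> = above_partial_sums ` G \<union> range columns_from"
  have "\<forall>Q\<in>\<F>. cofinite_columns Q"
    unfolding \<F>_def using cofinite_columns_above_partial_sums cofinite_columns_columns_from by blast
  then have "\<forall>Q\<in>\<F>. infinite Q" and "SFIP \<F>"
    using cofinite_columns_infinite SFIP_cofinite_columns by blast+
  moreover have "|\<F>| <o continuum"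
    unfolding \<F>_def
    by (rule card_of_Un_less_continuum[OF card_of_image_less_continuum[OF assms(2)]
          card_of_image_less_continuum[OF card_of_nat_less_continuum]])
  ultimately obtain P where "pseudointersection P \<F>"
    using pseudointersection_exists[OF \<open>p_eq_c\<close>] by blast
  then have "infinite P" and P: "\<And>Q. Q \<in> \<F> \<Longrightarrow> finite (P - Q)"
    unfolding pseudointersection_def almost_subset_def by auto
  have "P \<inter> columns_from m \<noteq> {}" for m
  proof
    assume "P \<inter> columns_from m = {}"
    then have "P - columns_from m = P"
      by blast
    moreover have "finite (P - columns_from m)"
      using P unfolding \<F>_def by simp
    ultimately show False
      using \<open>infinite P\<close> by simp
  qed
  moreover have "finite (P - above_partial_sums f)" if "f \<in> G" for f
    using P that unfolding \<F>_def by simp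
  ultimately show ?thesis
    by (rule dominating_of_pseudointersection)
qed

lemma almost_disjoint_family_mono:
  "almost_disjoint_family \<B> \<Longrightarrow> \<C> \<subseteq> \<B> \<Longrightarrow> almost_disjoint_family \<C>"
  unfolding almost_disjoint_family_def by blast

lemma ideal_gen_mono: "\<C> \<subseteq> \<B> \<Longrightarrow> ideal_gen \<C> \<subseteq> ideal_gen \<B>"
  unfolding ideal_gen_def by blast

lemma Union_in_ideal_gen: "F \<subseteq> \<C> \<Longrightarrow> finite F \<Longrightarrow> \<Union>F \<in> ideal_gen \<C>"
  unfolding ideal_gen_def by auto

lemma finite_infinite_Int_of_ideal_gen:
  assumes ad: "almost_disjoint_family \<C>" and "Y \<in> ideal_gen \<C>"
  shows "finite {c\<in>\<C>. infinite (Y \<inter> c)}"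
proof -
  obtain F where F: "F \<subseteq> \<C>" "finite F" "finite (Y - \<Union>F)"
    using assms(2) unfolding ideal_gen_def by blast
  have "c \<in> F" if c: "c \<in> \<C>" "infinite (Y \<inter> c)" for c
  proof (rule ccontr)
    assume "c \<notin> F"
    have "finite (c \<inter> d)" if "d \<in> F" for d
    proof -
      have "d \<in> \<C>" "c \<noteq> d"
        using F(1) that \<open>c \<notin> F\<close> by auto
      then show ?thesis
        using ad c(1) unfolding almost_disjoint_family_def by blast
    qed
    then have "finite (\<Union>d\<in>F. c \<inter> d)"
      by (rule finite_UN_I[OF F(2)])
    with F(3) have "finite ((Y - \<Union>F) \<union> (\<Union>d\<in>F. c \<inter> d))"
      by (rule finite_UnI)
    moreover have "Y \<inter> c \<subseteq> (Y - \<Union>F) \<union> (\<Union>d\<in>F. c \<inter> d)" by blast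
    ultimately have "finite (Y \<inter> c)"
      by (rule rev_finite_subset)
    then show False using c(2) by contradiction
  qed
  then have "{c\<in>\<C>. infinite (Y \<inter> c)} \<subseteq> F"
    by blast
  then show ?thesis
    using F(2) by (rule finite_subset)
qed

lemma almost_subset_Union_infinite_Int_of_ideal_gen:
  assumes "Y \<in> ideal_gen \<C>"
  shows "almost_subset Y (\<Union>{c\<in>\<C>. infinite (Y \<inter> c)})"
proof -
  obtain F where F: "F \<subseteq> \<C>" "finite F" "finite (Y - \<Union>F)"
    using assms unfolding ideal_gen_def by blast
  define S where "S = {c\<in>\<C>. infinite (Y \<inter> c)}"
  have "Y - \<Union>S \<subseteq> (Y - \<Union>F) \<union> (\<Union>d\<in>F - S. Y \<inter> d)"
    by blast
  moreover have "finite (\<Union>d\<in>F - S. Y \<inter> d)"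
    using F(1,2) unfolding S_def by (intro finite_UN_I) auto
  ultimately show ?thesis
    using F(3) unfolding almost_subset_def S_def by (meson finite_UnI finite_subset)
qed

lemma SFIP_relative_complements:
  assumes "Y \<notin> ideal_gen \<C>"
  shows "\<forall>Q\<in>{Y} \<union> (\<lambda>c. Y - c) ` \<C>. infinite Q" and "SFIP ({Y} \<union> (\<lambda>c. Y - c) ` \<C>)"
proof -
  have uncovered: "infinite (Y - \<Union>F)" if "F \<subseteq> \<C>" "finite F" for F
    using assms that unfolding ideal_gen_def by blast
  show "\<forall>Q\<in>{Y} \<union> (\<lambda>c. Y - c) ` \<C>. infinite Q"
    using uncovered[of "{}"] uncovered[of "{c}" for c] by auto
  show "SFIP ({Y} \<union> (\<lambda>c. Y - c) ` \<C>)"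
    unfolding SFIP_def
  proof (intro allI impI)
    fix \<G> assume \<G>: "\<G> \<subseteq> {Y} \<union> (\<lambda>c. Y - c) ` \<C> \<and> finite \<G> \<and> \<G> \<noteq> {}"
    then have "\<G> - {Y} \<subseteq> (\<lambda>c. Y - c) ` \<C>" "finite (\<G> - {Y})"
      by auto
    then obtain F where F: "F \<subseteq> \<C>" "finite F" "\<G> - {Y} = (\<lambda>c. Y - c) ` F"
      by (meson finite_subset_image)
    have "Y - \<Union>F \<subseteq> Q" if "Q \<in> \<G>" for Q
    proof (cases "Q = Y")
      case False
      then have "Q \<in> (\<lambda>c. Y - c) ` F"
        using that F(3) by blast
      then show ?thesis by blast
    qed simp
    then have "Y - \<Union>F \<subseteq> \<Inter>\<G>" by blast
    then show "infinite (\<Inter>\<G>)"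
      using uncovered[OF F(1,2)] finite_subset by blast
  qed
qed

lemma pseudointersection_avoiding:
  fixes Y :: "nat set"
  assumes p_eq_c and "|\<C>| <o continuum" and "Y \<notin> ideal_gen \<C>"
  shows "\<exists>P\<subseteq>Y. infinite P \<and> (\<forall>c\<in>\<C>. finite (P \<inter> c))"
proof -
  have "|{Y} \<union> (\<lambda>c. Y - c) ` \<C>| <o continuum"
    by (rule card_of_Un_less_continuum[OF card_of_finite_less_continuum
          card_of_image_less_continuum[OF assms(2)]]) simp
  then obtain P where "pseudointersection P ({Y} \<union> (\<lambda>c. Y - c) ` \<C>)"
    using pseudointersection_exists[OF \<open>p_eq_c\<close> SFIP_relative_complements[OF assms(3)]] by blast
  then have "infinite P" and "finite (P - Y)" and P_c: "\<And>c. c \<in> \<C> \<Longrightarrow> finite (P - (Y - c))"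
    unfolding pseudointersection_def almost_subset_def by auto
  then have "infinite (P \<inter> Y)"
    using Diff_infinite_finite by (metis Diff_Diff_Int)
  moreover have "finite (P \<inter> Y \<inter> c)" if "c \<in> \<C>" for c
    using P_c[OF that] by (rule rev_finite_subset) blast
  ultimately show ?thesis
    by (intro exI[of _ "P \<inter> Y"]) blast
qed

lemma choice_with_finite_fibres:
  fixes S :: "nat \<Rightarrow> 'a set"
  assumes S: "\<And>j. j \<in> E \<Longrightarrow> finite (S j) \<and> S j \<noteq> {}"
    and few: "\<And>T. finite T \<Longrightarrow> finite {j\<in>E. S j \<subseteq> T}"
  shows "\<exists>g. (\<forall>j\<in>E. g j \<in> S j) \<and> (\<forall>c. finite {j\<in>E. g j = c})"
proof -
  define first where "first c = (LEAST i. i \<in> E \<and> c \<in> S i)" for c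
  have first: "first c \<in> E \<and> c \<in> S (first c) \<and> first c \<le> j" if "j \<in> E" "c \<in> S j" for c j
    unfolding first_def using that by (metis (mono_tags, lifting) LeastI Least_le)
  have "\<exists>c. c \<in> S j \<and> (\<forall>c'\<in>S j. first c' \<le> first c)" if "j \<in> E" for j
  proof -
    have "Max (first ` S j) \<in> first ` S j"
      using S[OF that] by (intro Max_in) auto
    then obtain c where "Max (first ` S j) = first c" "c \<in> S j"
      by (rule imageE)
    moreover have "first c' \<le> Max (first ` S j)" if "c' \<in> S j" for c'
      using S[OF \<open>j \<in> E\<close>] that by simp
    ultimately show ?thesis by metis
  qed
  \<comment> \<open>Taking in \<open>S j\<close> an element that occurs first as late as possible, \<open>g j = c\<close> forces
    \<open>S j \<subseteq> (\<Union>i\<le>first c. S i)\<close>, which happens only finitely often.\<close>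
  then obtain g where g: "\<And>j. j \<in> E \<Longrightarrow> g j \<in> S j \<and> (\<forall>c'\<in>S j. first c' \<le> first (g j))"
    using bchoice[of E "\<lambda>j c. c \<in> S j \<and> (\<forall>c'\<in>S j. first c' \<le> first c)"] by blast
  have "finite {j\<in>E. g j = c}" for c
  proof -
    define T where "T = (\<Union>i\<in>{i\<in>E. i \<le> first c}. S i)"
    have "finite T"
      unfolding T_def using S by simp
    have "S j \<subseteq> T" if "j \<in> E" "g j = c" for j
    proof
      fix c' assume "c' \<in> S j"
      then have "first c' \<le> first c" "first c' \<in> E" "c' \<in> S (first c')"
        using g[OF \<open>j \<in> E\<close>] first[OF \<open>j \<in> E\<close>] that(2) by auto
      then show "c' \<in> T"
        unfolding T_def by blast
    qed
    then have "{j\<in>E. g j = c} \<subseteq> {j\<in>E. S j \<subseteq> T}"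
      by blast
    then show ?thesis
      using few[OF \<open>finite T\<close>] by (rule finite_subset)
  qed
  then show ?thesis
    using g by (intro exI[of _ g]) blast
qed

lemma set_meeting_all_avoiding:
  fixes Z :: "nat \<Rightarrow> nat set"
  assumes p_eq_c and "|\<C>| <o continuum" and "\<And>j. infinite (Z j)"
    and few: "\<And>c. c \<in> \<C> \<Longrightarrow> finite {j. infinite (Z j \<inter> c)}"
  shows "\<exists>A. infinite A \<and> (\<forall>j. A \<inter> Z j \<noteq> {}) \<and> (\<forall>c\<in>\<C>. finite (A \<inter> c))"
proof -
  \<comment> \<open>\<open>bound c j\<close> exceeds all of \<open>Z j \<inter> c\<close> when this set is finite; otherwise it is junk.\<close>
  define bound where "bound c j = Suc (Max (insert 0 (Z j \<inter> c)))" for c j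
  obtain h where h: "\<And>c. c \<in> \<C> \<Longrightarrow> finite {j. h j < bound c j}"
    using small_family_dominated[OF \<open>p_eq_c\<close> card_of_image_less_continuum[OF assms(2)]] by blast
  have "\<exists>a\<in>Z j. max (h j) j \<le> a" for j
    using assms(3) unfolding infinite_nat_iff_unbounded_le by blast
  then obtain a where a: "\<And>j. a j \<in> Z j" and a_large: "\<And>j. max (h j) j \<le> a j"
    by metis
  have "infinite (range a)"
    unfolding infinite_nat_iff_unbounded_le using a_large by (metis max.bounded_iff rangeI)
  moreover have "finite (range a \<inter> c)" if "c \<in> \<C>" for c
  proof -
    have "j \<in> {j. infinite (Z j \<inter> c)} \<union> {j. h j < bound c j}" if "a j \<in> c" for j
    proof (cases "finite (Z j \<inter> c)")
      case True
      then have "a j \<le> Max (insert 0 (Z j \<inter> c))"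
        using a[of j] that by (intro Max_ge) auto
      then show ?thesis
        using a_large[of j] unfolding bound_def by simp
    qed simp
    then have "{j. a j \<in> c} \<subseteq> {j. infinite (Z j \<inter> c)} \<union> {j. h j < bound c j}"
      by blast
    moreover have "finite ({j. infinite (Z j \<inter> c)} \<union> {j. h j < bound c j})"
      using few[OF that] h[OF that] by simp
    ultimately have "finite {j. a j \<in> c}"
      by (rule finite_subset)
    moreover have "range a \<inter> c = a ` {j. a j \<in> c}" by blast
    ultimately show ?thesis by simp
  qed
  ultimately show ?thesis using a by blast
qed

lemma ideal_gen_member_choice:
  fixes X :: "nat \<Rightarrow> nat set"
  assumes ad: "almost_disjoint_family \<C>"
    and X_inf: "\<forall>n. infinite (X n)"
    and X_not_small: "\<forall>Y\<in>ideal_gen \<C>. finite {n. almost_subset (X n) Y}"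
  shows "\<exists>g. (\<forall>j. X j \<in> ideal_gen \<C> \<longrightarrow> g j \<in> \<C> \<and> infinite (X j \<inter> g j)) \<and>
    (\<forall>c. finite {j. X j \<in> ideal_gen \<C> \<and> g j = c})"
proof -
  define E where "E = {j. X j \<in> ideal_gen \<C>}"
  define S where "S j = {c\<in>\<C>. infinite (X j \<inter> c)}" for j
  have S_covers: "almost_subset (X j) (\<Union>(S j))" if "j \<in> E" for j
    using that unfolding E_def S_def by (simp add: almost_subset_Union_infinite_Int_of_ideal_gen)
  have S_ok: "finite (S j) \<and> S j \<noteq> {}" if "j \<in> E" for j
  proof
    show "finite (S j)"
      using that unfolding E_def S_def by (simp add: finite_infinite_Int_of_ideal_gen[OF ad])
    show "S j \<noteq> {}"
    proof
      assume "S j = {}"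
      then have "finite (X j)"
        using S_covers[OF that] unfolding almost_subset_def by simp
      then show False
        using X_inf by blast
    qed
  qed
  have few: "finite {j\<in>E. S j \<subseteq> T}" if "finite T" for T
  proof -
    have "almost_subset (X j) (\<Union>(T \<inter> \<C>))" if "j \<in> E" "S j \<subseteq> T" for j
    proof -
      have "X j - \<Union>(T \<inter> \<C>) \<subseteq> X j - \<Union>(S j)"
        using that(2) unfolding S_def by blast
      then show ?thesis
        using S_covers[OF that(1)] unfolding almost_subset_def by (rule finite_subset)
    qed
    then have "{j\<in>E. S j \<subseteq> T} \<subseteq> {n. almost_subset (X n) (\<Union>(T \<inter> \<C>))}"
      by blast
    moreover have "finite {n. almost_subset (X n) (\<Union>(T \<inter> \<C>))}"
      using X_not_small Union_in_ideal_gen[of "T \<inter> \<C>" \<C>] that by simp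
    ultimately show ?thesis
      by (rule finite_subset)
  qed
  obtain g where "\<forall>j\<in>E. g j \<in> S j" "\<forall>c. finite {j\<in>E. g j = c}"
    using choice_with_finite_fibres[OF S_ok few] by blast
  then show ?thesis
    unfolding E_def S_def by (intro exI[of _ g]) simp
qed

lemma shrinking_with_finite_traces:
  fixes X :: "nat \<Rightarrow> nat set"
  assumes p_eq_c and ad: "almost_disjoint_family \<C>" and "|\<C>| <o continuum"
    and X_inf: "\<forall>n. infinite (X n)"
    and X_not_small: "\<forall>Y\<in>ideal_gen \<C>. finite {n. almost_subset (X n) Y}"
  shows "\<exists>Z. (\<forall>j. Z j \<subseteq> X j \<and> infinite (Z j)) \<and> (\<forall>c\<in>\<C>. finite {j. infinite (Z j \<inter> c)})"
proof -
  obtain g where g: "\<And>j. X j \<in> ideal_gen \<C> \<Longrightarrow> g j \<in> \<C> \<and> infinite (X j \<inter> g j)"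
    and g_fibres: "\<And>c. finite {j. X j \<in> ideal_gen \<C> \<and> g j = c}"
    using ideal_gen_member_choice[OF ad X_inf X_not_small] by blast
  have "\<exists>Z\<subseteq>X j. infinite Z \<and> (\<forall>c\<in>\<C>. infinite (Z \<inter> c) \<longrightarrow> X j \<in> ideal_gen \<C> \<and> g j = c)" for j
  proof (cases "X j \<in> ideal_gen \<C>")
    case True
    have "finite (X j \<inter> g j \<inter> c)" if "c \<in> \<C>" "c \<noteq> g j" for c
    proof -
      have "finite (g j \<inter> c)"
        using ad g[OF True] that unfolding almost_disjoint_family_def by blast
      then show ?thesis
        by (rule rev_finite_subset) blast
    qed
    then show ?thesis
      using True g[OF True] by (intro exI[of _ "X j \<inter> g j"]) blast
  next
    case False
    then obtain Z where "Z \<subseteq> X j" "infinite Z" "\<forall>c\<in>\<C>. finite (Z \<inter> c)"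
      using pseudointersection_avoiding[OF \<open>p_eq_c\<close> \<open>|\<C>| <o continuum\<close>] by blast
    then show ?thesis
      by (intro exI[of _ Z]) blast
  qed
  then obtain Z where Z: "\<And>j. Z j \<subseteq> X j \<and> infinite (Z j)"
    and Z_avoids: "\<And>j c. c \<in> \<C> \<Longrightarrow> infinite (Z j \<inter> c) \<Longrightarrow> X j \<in> ideal_gen \<C> \<and> g j = c"
    by metis
  have "finite {j. infinite (Z j \<inter> c)}" if "c \<in> \<C>" for c
  proof -
    have "{j. infinite (Z j \<inter> c)} \<subseteq> {j. X j \<in> ideal_gen \<C> \<and> g j = c}"
      using Z_avoids[OF that] by blast
    then show ?thesis
      using g_fibres by (rule finite_subset)
  qed
  then show ?thesis
    using Z by (intro exI[of _ Z]) blast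
qed

lemma almost_disjoint_set_meeting_all:
  fixes X :: "nat \<Rightarrow> nat set"
  assumes p_eq_c and ad: "almost_disjoint_family \<C>" and "|\<C>| <o continuum"
    and X_inf: "\<forall>n. infinite (X n)"
    and X_not_small: "\<forall>Y\<in>ideal_gen \<C>. finite {n. almost_subset (X n) Y}"
  shows "\<exists>A. infinite A \<and> (\<forall>c\<in>\<C>. finite (A \<inter> c)) \<and> (\<forall>n. A \<inter> X n \<noteq> {})"
proof -
  obtain Z where Z: "\<And>j. Z j \<subseteq> X j" "\<And>j. infinite (Z j)"
    and few: "\<And>c. c \<in> \<C> \<Longrightarrow> finite {j. infinite (Z j \<inter> c)}"
    using shrinking_with_finite_traces[OF assms] by blast
  obtain A where "infinite A" "\<forall>j. A \<inter> Z j \<noteq> {}" "\<forall>c\<in>\<C>. finite (A \<inter> c)"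
    using set_meeting_all_avoiding[OF \<open>p_eq_c\<close> \<open>|\<C>| <o continuum\<close> Z(2) few] by blast
  moreover have "A \<inter> X n \<noteq> {}" for n
    using Z(1)[of n] \<open>\<forall>j. A \<inter> Z j \<noteq> {}\<close> by blast
  ultimately show ?thesis
    by (intro exI[of _ A]) blast
qed

lemma finite_Int_ideal_gen:
  assumes "\<forall>b\<in>\<B>. finite (Z \<inter> b)" and "Y \<in> ideal_gen \<B>"
  shows "finite (Z \<inter> Y)"
proof -
  obtain F where F: "F \<subseteq> \<B>" "finite F" "finite (Y - \<Union>F)"
    using assms(2) unfolding ideal_gen_def by blast
  have "finite (\<Union>b\<in>F. Z \<inter> b)"
    using F(1) assms(1) by (intro finite_UN_I[OF F(2)]) blast
  with F(3) have "finite ((Y - \<Union>F) \<union> (\<Union>b\<in>F. Z \<inter> b))"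
    by (rule finite_UnI)
  moreover have "Z \<inter> Y \<subseteq> (Y - \<Union>F) \<union> (\<Union>b\<in>F. Z \<inter> b)"
    by blast
  ultimately show ?thesis
    by (rule rev_finite_subset)
qed

lemma strongly_tight_ideal_tall:
  assumes "strongly_tight_ideal \<I>" and "infinite Z"
  shows "\<exists>Y\<in>\<I>. infinite (Z \<inter> Y)"
proof (rule ccontr)
  assume "\<not> (\<exists>Y\<in>\<I>. infinite (Z \<inter> Y))"
  then have Z_orth: "finite (Z \<inter> Y)" if "Y \<in> \<I>" for Y
    using that by blast
  define X where "X n = Z - {..<n}" for n
  have X_inf: "\<forall>n. infinite (X n)"
    unfolding X_def using \<open>infinite Z\<close> by simp
  have "\<not> almost_subset (X n) Y" if "Y \<in> \<I>" for n Y
  proof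
    assume "almost_subset (X n) Y"
    then have "finite ((X n - Y) \<union> (Z \<inter> Y))"
      using Z_orth[OF that] unfolding almost_subset_def by simp
    moreover have "X n \<subseteq> (X n - Y) \<union> (Z \<inter> Y)"
      unfolding X_def by blast
    ultimately have "finite (X n)"
      by (rule rev_finite_subset)
    then show False
      using X_inf by blast
  qed
  then have "\<forall>Y\<in>\<I>. finite {n. almost_subset (X n) Y}"
    by simp
  then obtain A where "A \<in> \<I>" and A: "\<forall>n. A \<inter> X n \<noteq> {}"
    using assms(1)[unfolded strongly_tight_ideal_def, rule_format, of X] X_inf by blast
  have "infinite (Z \<inter> A)"
    unfolding infinite_nat_iff_unbounded_le
  proof
    fix m
    obtain x where "x \<in> A \<inter> X m"
      using A by blast
    then show "\<exists>n\<ge>m. n \<in> Z \<inter> A"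
      unfolding X_def by (intro exI[of _ x]) auto
  qed
  then show False
    using Z_orth[OF \<open>A \<in> \<I>\<close>] by contradiction
qed

lemma strongly_tight_imp_MAD_family:
  assumes ad: "almost_disjoint_family \<B>" and "strongly_tight \<B>"
  shows "MAD_family \<B>"
  unfolding MAD_family_def
proof (intro conjI ad allI impI)
  fix \<B>' assume \<B>': "almost_disjoint_family \<B>' \<and> \<B> \<subseteq> \<B>'"
  show "\<B>' = \<B>"
  proof (rule ccontr)
    assume "\<B>' \<noteq> \<B>"
    then have "\<not> \<B>' \<subseteq> \<B>"
      using \<B>' subset_antisym by metis
    then obtain Z where "Z \<in> \<B>'" "Z \<notin> \<B>"
      unfolding subset_iff by blast
    have "infinite Z"
      using \<B>' \<open>Z \<in> \<B>'\<close> unfolding almost_disjoint_family_def by blast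
    have "finite (Z \<inter> b)" if "b \<in> \<B>" for b
    proof -
      have "b \<in> \<B>'" "Z \<noteq> b"
        using \<B>' that \<open>Z \<notin> \<B>\<close> by auto
      then show ?thesis
        using \<B>' \<open>Z \<in> \<B>'\<close> unfolding almost_disjoint_family_def by blast
    qed
    then have "\<forall>b\<in>\<B>. finite (Z \<inter> b)"
      by blast
    obtain Y where "Y \<in> ideal_gen \<B>" "infinite (Z \<inter> Y)"
      using \<open>infinite Z\<close> strongly_tight_ideal_tall[OF \<open>strongly_tight \<B>\<close>[unfolded strongly_tight_def]]
      by blast
    then show False
      using finite_Int_ideal_gen[OF \<open>\<forall>b\<in>\<B>. finite (Z \<inter> b)\<close>] by simp
  qed
qed

lemma well_order_recursion:
  assumes "Well_order r"
  shows "\<exists>F. \<forall>\<alpha>. F \<alpha> = H (F ` underS r \<alpha>) \<alpha>"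
proof -
  define H' where "H' f \<alpha> = H (f ` underS r \<alpha>) \<alpha>" for f \<alpha>
  have wo: "wo_rel r"
    using assms by (simp add: wo_rel_def)
  have "wo_rel.adm_wo r H'"
    unfolding wo_rel.adm_wo_def[OF wo]
  proof (intro allI impI)
    fix f g :: "'a \<Rightarrow> 'b" and \<alpha>
    assume "\<forall>\<beta>\<in>underS r \<alpha>. f \<beta> = g \<beta>"
    then have "f ` underS r \<alpha> = g ` underS r \<alpha>"
      by (intro image_cong) auto
    then show "H' f \<alpha> = H' g \<alpha>"
      unfolding H'_def by simp
  qed
  define F where "F = wo_rel.worec r H'"
  have "F = H' F"
    unfolding F_def by (rule wo_rel.worec_fixpoint[OF wo \<open>wo_rel.adm_wo r H'\<close>])
  then have "F \<alpha> = H (F ` underS r \<alpha>) \<alpha>" for \<alpha>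
    using fun_cong[of F "H' F" \<alpha>] unfolding H'_def by simp
  then show ?thesis
    by (intro exI[of _ F]) blast
qed

definition decode_sequence :: "nat set \<Rightarrow> nat \<Rightarrow> nat set" where
  "decode_sequence \<alpha> n = {k. prod_encode (n, k) \<in> \<alpha>}"

lemma surj_decode_sequence: "surj decode_sequence"
proof (rule surjI)
  fix X :: "nat \<Rightarrow> nat set"
  show "decode_sequence {prod_encode (m, k) | m k. k \<in> X m} = X"
    unfolding decode_sequence_def by (auto simp: prod_encode_eq)
qed

definition meets_avoiding :: "nat set set \<Rightarrow> (nat \<Rightarrow> nat set) \<Rightarrow> nat set \<Rightarrow> bool" where
  "meets_avoiding \<C> X A \<longleftrightarrow> infinite A \<and> (\<forall>c\<in>\<C>. finite (A \<inter> c)) \<and> (\<forall>n. A \<inter> X n \<noteq> {})"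

lemma almost_disjoint_family_Un:
  assumes ad: "almost_disjoint_family \<A>" and "\<forall>X\<in>\<N>. infinite X"
    and new: "\<And>X Y. X \<in> \<N> \<Longrightarrow> Y \<in> \<A> \<union> \<N> \<Longrightarrow> X \<noteq> Y \<Longrightarrow> finite (X \<inter> Y)"
  shows "almost_disjoint_family (\<A> \<union> \<N>)"
  unfolding almost_disjoint_family_def
proof (intro conjI ballI impI)
  fix X assume "X \<in> \<A> \<union> \<N>"
  then show "infinite X"
    using ad assms(2) unfolding almost_disjoint_family_def by blast
next
  fix X Y assume XY: "X \<in> \<A> \<union> \<N>" "Y \<in> \<A> \<union> \<N>" "X \<noteq> Y"
  consider "X \<in> \<A>" "Y \<in> \<A>" | "X \<in> \<N>" | "Y \<in> \<N>"
    using XY(1,2) by blast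
  then show "finite (X \<inter> Y)"
  proof cases
    case 1
    then show ?thesis
      using ad XY(3) unfolding almost_disjoint_family_def by blast
  next
    case 2
    then show ?thesis
      using new XY(2,3) by blast
  next
    case 3
    then have "finite (Y \<inter> X)"
      using new XY(1,3) by blast
    then show ?thesis
      by (simp add: Int_commute)
  qed
qed

lemma almost_disjoint_family_Un_recursive:
  assumes ad: "almost_disjoint_family \<A>" and "Linear_order r" and "Field r = UNIV"
    and F: "\<And>\<alpha>. F \<alpha> \<noteq> {} \<Longrightarrow>
      infinite (F \<alpha>) \<and> (\<forall>c\<in>\<A> \<union> (F ` underS r \<alpha> - {{}}). finite (F \<alpha> \<inter> c))"
  shows "almost_disjoint_family (\<A> \<union> (range F - {{}}))"
proof (rule almost_disjoint_family_Un[OF ad])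
  show "\<forall>X\<in>range F - {{}}. infinite X"
    using F by blast
next
  fix X Y assume X: "X \<in> range F - {{}}" and Y: "Y \<in> \<A> \<union> (range F - {{}})" and "X \<noteq> Y"
  then obtain \<alpha> where \<alpha>: "X = F \<alpha>" "F \<alpha> \<noteq> {}"
    by blast
  show "finite (X \<inter> Y)"
  proof (cases "Y \<in> \<A>")
    case True
    then show ?thesis
      using F[OF \<alpha>(2)] \<alpha>(1) by blast
  next
    case False
    then obtain \<beta> where \<beta>: "Y = F \<beta>" "F \<beta> \<noteq> {}"
      using Y by blast
    then have "\<alpha> \<noteq> \<beta>"
      using \<alpha>(1) \<open>X \<noteq> Y\<close> by blast
    then have "(\<alpha>, \<beta>) \<in> r \<or> (\<beta>, \<alpha>) \<in> r"
      using \<open>Linear_order r\<close> \<open>Field r = UNIV\<close> unfolding order_on_defs total_on_def by blast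
    then have "\<beta> \<in> underS r \<alpha> \<or> \<alpha> \<in> underS r \<beta>"
      using \<open>\<alpha> \<noteq> \<beta>\<close> unfolding underS_def by auto
    then show ?thesis
    proof
      assume "\<beta> \<in> underS r \<alpha>"
      then show ?thesis
        using F[OF \<alpha>(2)] \<alpha>(1) \<beta> by blast
    next
      assume "\<alpha> \<in> underS r \<beta>"
      then have "finite (F \<beta> \<inter> F \<alpha>)"
        using F[OF \<beta>(2)] \<alpha>(2) by blast
      then show ?thesis
        using \<alpha>(1) \<beta>(1) by (simp add: Int_commute)
    qed
  qed
qed

lemma strongly_tight_Un_recursive:
  fixes \<A> :: "nat set set" and F :: "nat set \<Rightarrow> nat set"
  defines "\<B> \<equiv> \<A> \<union> (range F - {{}})"
    and "stage \<alpha> \<equiv> \<A> \<union> (F ` underS continuum \<alpha> - {{}})"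
  assumes p_eq_c and "|\<A>| <o continuum" and "almost_disjoint_family \<B>"
    and F: "\<And>\<alpha>. \<exists>A. meets_avoiding (stage \<alpha>) (decode_sequence \<alpha>) A \<Longrightarrow>
      meets_avoiding (stage \<alpha>) (decode_sequence \<alpha>) (F \<alpha>)"
  shows "strongly_tight \<B>"
  unfolding strongly_tight_def strongly_tight_ideal_def
proof (intro allI impI)
  fix X :: "nat \<Rightarrow> nat set"
  assume X: "(\<forall>n. infinite (X n)) \<and> (\<forall>Y\<in>ideal_gen \<B>. finite {n. almost_subset (X n) Y})"
  obtain \<alpha> where \<alpha>: "decode_sequence \<alpha> = X"
    using surj_decode_sequence by (metis surj_def)
  have "stage \<alpha> \<subseteq> \<B>"
    unfolding stage_def \<B>_def by blast
  have "|F ` underS continuum \<alpha> - {{}}| \<le>o |F ` underS continuum \<alpha>|"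
    by (rule card_of_mono1) blast
  then have "|F ` underS continuum \<alpha> - {{}}| <o continuum"
    using card_of_image_underS_less_continuum by (rule ordLeq_ordLess_trans)
  then have "|stage \<alpha>| <o continuum"
    unfolding stage_def by (rule card_of_Un_less_continuum[OF assms(4)])
  moreover have "almost_disjoint_family (stage \<alpha>)"
    using almost_disjoint_family_mono[OF assms(5) \<open>stage \<alpha> \<subseteq> \<B>\<close>] .
  moreover have "\<forall>Y\<in>ideal_gen (stage \<alpha>). finite {n. almost_subset (X n) Y}"
    using X ideal_gen_mono[OF \<open>stage \<alpha> \<subseteq> \<B>\<close>] by blast
  moreover have "\<forall>n. infinite (X n)"
    using X by blast
  ultimately have "\<exists>A. meets_avoiding (stage \<alpha>) X A"
    unfolding meets_avoiding_def by (intro almost_disjoint_set_meeting_all[OF \<open>p_eq_c\<close>])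
  then have "meets_avoiding (stage \<alpha>) X (F \<alpha>)"
    by (rule F[of \<alpha>, unfolded \<alpha>])
  then have "F \<alpha> \<in> \<B>" and "\<forall>n. F \<alpha> \<inter> X n \<noteq> {}"
    unfolding meets_avoiding_def \<B>_def by auto
  moreover have "F \<alpha> \<in> ideal_gen \<B>"
    using Union_in_ideal_gen[of "{F \<alpha>}" \<B>] \<open>F \<alpha> \<in> \<B>\<close> by simp
  ultimately show "\<exists>A\<in>ideal_gen \<B>. \<forall>n. A \<inter> X n \<noteq> {}"
    by blast
qed

lemma strongly_tight_extension:
  assumes p_eq_c and ad: "almost_disjoint_family \<A>" and "|\<A>| <o continuum"
  shows "\<exists>\<B>. \<A> \<subseteq> \<B> \<and> almost_disjoint_family \<B> \<and> strongly_tight \<B>"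
proof -
  \<comment> \<open>\<open>{}\<close> marks the stages at which nothing is added.\<close>
  define pick where "pick I \<alpha> = (let \<C> = \<A> \<union> (I - {{}}) in
      if \<exists>A. meets_avoiding \<C> (decode_sequence \<alpha>) A
      then SOME A. meets_avoiding \<C> (decode_sequence \<alpha>) A else {})" for I \<alpha>
  obtain F where F: "\<And>\<alpha>. F \<alpha> = pick (F ` underS continuum \<alpha>) \<alpha>"
    using well_order_recursion[OF card_of_Well_order] by blast
  define stage where "stage \<alpha> = \<A> \<union> (F ` underS continuum \<alpha> - {{}})" for \<alpha>
  have F_good: "meets_avoiding (stage \<alpha>) (decode_sequence \<alpha>) (F \<alpha>)"
    if "\<exists>A. meets_avoiding (stage \<alpha>) (decode_sequence \<alpha>) A" for \<alpha>
    using someI_ex[OF that] that F[of \<alpha>] unfolding pick_def stage_def Let_def by simp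
  have "meets_avoiding (stage \<alpha>) (decode_sequence \<alpha>) (F \<alpha>)" if "F \<alpha> \<noteq> {}" for \<alpha>
  proof (rule F_good, rule ccontr)
    assume none: "\<nexists>A. meets_avoiding (stage \<alpha>) (decode_sequence \<alpha>) A"
    have "F \<alpha> = (if \<exists>A. meets_avoiding (stage \<alpha>) (decode_sequence \<alpha>) A
        then SOME A. meets_avoiding (stage \<alpha>) (decode_sequence \<alpha>) A else {})"
      using F[of \<alpha>] unfolding pick_def stage_def Let_def .
    then show False
      using that by (simp only: if_not_P[OF none])
  qed
  then have F_new: "infinite (F \<alpha>) \<and>
      (\<forall>c\<in>\<A> \<union> (F ` underS continuum \<alpha> - {{}}). finite (F \<alpha> \<inter> c))"
    if "F \<alpha> \<noteq> {}" for \<alpha>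
    using that unfolding meets_avoiding_def stage_def by blast
  have "Linear_order continuum"
    using card_of_Well_order unfolding well_order_on_def by blast
  then have "almost_disjoint_family (\<A> \<union> (range F - {{}}))"
    by (rule almost_disjoint_family_Un_recursive[OF ad _ Field_card_of F_new])
  moreover have "strongly_tight (\<A> \<union> (range F - {{}}))"
    by (rule strongly_tight_Un_recursive[OF \<open>p_eq_c\<close> assms(3) calculation
          F_good[unfolded stage_def]])
  ultimately show ?thesis
    by (intro exI[of _ "\<A> \<union> (range F - {{}})"]) blast
qed

theorem mainTheorem10:
  assumes "p_eq_c"
    and "almost_disjoint_family \<A>"
    and "(card_of \<A>, card_of (UNIV :: nat set set)) \<in> ordLess"
  shows "\<exists>\<B>. \<A> \<subseteq> \<B> \<and> MAD_family \<B> \<and> strongly_tight \<B>"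
proof -
  obtain \<B> where "\<A> \<subseteq> \<B>" "almost_disjoint_family \<B>" "strongly_tight \<B>"
    using strongly_tight_extension assms by blast
  then show ?thesis
    using strongly_tight_imp_MAD_family by blast
qed

end
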